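(* Let $n\geq1$ and let $F:\mathbb{C}\to\mathbb{C}$ be additive. Then $F$ satisfies $$F(\alpha^{n+1})=\sum_{i=1}^{n}\binom{n+1}{i}(-1)^{n-i}\,\alpha^{n+1-i}\,F(\alpha^i)\quad\text{for all }\alpha\in\mathbb{C}$$ if and only if for all $x_1,\ldots,x_{n+1}\in\mathbb{C}$ $$F(x_1\cdots x_{n+1})=\sum_{k=1}^{n}(-1)^{k+1}\sum_{1\leq i_1<\cdots<i_k\leq n+1}x_{i_1}\cdots x_{i_k}\,F\big(x_1\cdots\widehat{x_{i_1}}\cdots\widehat{x_{i_k}}\cdots x_{n+1}\big),$$ where $\widehat{x_j}$ means that the factor $x_j$ is omitted. *)

theory Defs
  imports Complex_Main
begin

definition additive_fun :: "(complex \<Rightarrow> complex) \<Rightarrow> bool" where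
  "additive_fun F \<longleftrightarrow> (\<forall>x y. F (x + y) = F x + F y)"

end

theory Submission
  imports Defs "HOL-Computational_Algebra.Polynomial" "HOL-Combinatorics.Permutations"
begin

(* Let \<Phi>(x) be F(x_1 \<cdots> x_{n+1}) minus the right-hand side. Since F is additive, \<Phi> is additive
   in each variable, and it is symmetric because the right-hand side sums over all subsets of
   each size. For x_1 = \<dots> = x_{n+1} = \<alpha> the right-hand side collapses to the binomial sum, so
   the identity in \<alpha> says exactly that \<Phi> vanishes on the diagonal.
   A symmetric multi-additive \<Phi> vanishing on the diagonal vanishes identically (polarization):
   suppose \<Phi> vanishes whenever the variables outside J agree, and let x agree with b outside
   J \<union> {p}. Replacing the variables outside J by q x_p + b gives 0 for every q \<in> \<nat>; expanding,
   this is a polynomial in q whose linear coefficient is, by symmetry, a positive multiple of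
   \<Phi>(x). *)

definition multiadditive_on :: "'i set \<Rightarrow> (('i \<Rightarrow> 'a::plus) \<Rightarrow> 'b::plus) \<Rightarrow> bool" where
  "multiadditive_on I \<Phi> \<longleftrightarrow>
     (\<forall>x j a b. j \<in> I \<longrightarrow> \<Phi> (x(j := a + b)) = \<Phi> (x(j := a)) + \<Phi> (x(j := b)))"

definition symmetric_on :: "'i set \<Rightarrow> (('i \<Rightarrow> 'a) \<Rightarrow> 'b) \<Rightarrow> bool" where
  "symmetric_on I \<Phi> \<longleftrightarrow> (\<forall>x \<sigma>. \<sigma> permutes I \<longrightarrow> \<Phi> (x \<circ> \<sigma>) = \<Phi> x)"

lemma multiadditive_onD:
  "multiadditive_on I \<Phi> \<Longrightarrow> j \<in> I \<Longrightarrow> \<Phi> (x(j := a + b)) = \<Phi> (x(j := a)) + \<Phi> (x(j := b))"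
  by (simp add: multiadditive_on_def)

lemma multiadditive_on_diff:
  fixes \<Phi> \<Psi> :: "('i \<Rightarrow> 'a::plus) \<Rightarrow> 'b::ab_group_add"
  assumes "multiadditive_on I \<Phi>" and "multiadditive_on I \<Psi>"
  shows "multiadditive_on I (\<lambda>x. \<Phi> x - \<Psi> x)"
  using assms by (simp add: multiadditive_on_def)

lemma multiadditive_on_sum:
  fixes \<Phi> :: "'k \<Rightarrow> ('i \<Rightarrow> 'a::plus) \<Rightarrow> 'b::comm_monoid_add"
  assumes "\<And>k. k \<in> K \<Longrightarrow> multiadditive_on I (\<Phi> k)"
  shows "multiadditive_on I (\<lambda>x. \<Sum>k\<in>K. \<Phi> k x)"
  using assms by (simp add: multiadditive_on_def sum.distrib)

lemma multiadditive_on_cmult: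
  fixes \<Phi> :: "('i \<Rightarrow> 'a::plus) \<Rightarrow> 'b::semiring"
  assumes "multiadditive_on I \<Phi>"
  shows "multiadditive_on I (\<lambda>x. c * \<Phi> x)"
  using assms by (simp add: multiadditive_on_def distrib_left)

lemma symmetric_on_diff:
  fixes \<Phi> \<Psi> :: "('i \<Rightarrow> 'a) \<Rightarrow> 'b::minus"
  assumes "symmetric_on I \<Phi>" and "symmetric_on I \<Psi>"
  shows "symmetric_on I (\<lambda>x. \<Phi> x - \<Psi> x)"
  using assms by (simp add: symmetric_on_def)

lemma symmetric_on_prod:
  fixes A :: "'i set" and g :: "'a::comm_monoid_mult \<Rightarrow> 'b"
  shows "symmetric_on A (\<lambda>x. g (\<Prod>j\<in>A. x j))"
  unfolding symmetric_on_def
proof (intro allI impI)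
  fix x :: "'i \<Rightarrow> 'a" and \<sigma> assume "\<sigma> permutes A"
  then have "(\<Prod>j\<in>A. x (\<sigma> j)) = (\<Prod>j\<in>A. x j)"
    by (rule prod.reindex_bij_betw[OF permutes_imp_bij])
  then show "g (\<Prod>j\<in>A. (x \<circ> \<sigma>) j) = g (\<Prod>j\<in>A. x j)"
    by simp
qed

lemma multiadditive_on_expand:
  fixes \<Phi> :: "('i \<Rightarrow> 'a::plus) \<Rightarrow> 'b::comm_monoid_add"
  assumes \<Phi>: "multiadditive_on I \<Phi>" and "finite B" and "B \<subseteq> I"
  shows "\<Phi> (\<lambda>j. if j \<in> B then u j + v j else x j) =
    (\<Sum>T\<in>Pow B. \<Phi> (\<lambda>j. if j \<in> T then u j else if j \<in> B then v j else x j))"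
  using assms(2,3)
proof (induction B arbitrary: x rule: finite_induct)
  case empty
  then show ?case by simp
next
  case (insert i B)
  define g where "g T = (\<lambda>j. if j \<in> T then u j else if j \<in> B then v j else x j)" for T
  define h where "h T = (\<lambda>j. if j \<in> T then u j else if j \<in> insert i B then v j else x j)" for T
  have i: "i \<in> I"
    using insert.prems by simp
  have g_upd: "(\<lambda>j. if j \<in> T then u j else if j \<in> B then v j else (x(i := c)) j) = (g T)(i := c)"
    if "T \<subseteq> B" for T c
    using that insert.hyps by (auto simp: g_def fun_eq_iff)
  have h_g: "h T = (g T)(i := v i)" "h (insert i T) = (g T)(i := u i)" if "T \<subseteq> B" for T
    using that insert.hyps by (auto simp: g_def h_def fun_eq_iff)
  have "\<Phi> (\<lambda>j. if j \<in> insert i B then u j + v j else x j) =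
      \<Phi> (\<lambda>j. if j \<in> B then u j + v j else (x(i := u i + v i)) j)"
    by (rule arg_cong[where f = \<Phi>]) (auto simp: fun_eq_iff)
  also have "\<dots> = (\<Sum>T\<in>Pow B. \<Phi> (\<lambda>j. if j \<in> T then u j else if j \<in> B then v j else (x(i := u i + v i)) j))"
    using insert.prems by (intro insert.IH) simp
  also have "\<dots> = (\<Sum>T\<in>Pow B. \<Phi> ((g T)(i := u i + v i)))"
    by (intro sum.cong refl) (simp only: g_upd Pow_iff)
  also have "\<dots> = (\<Sum>T\<in>Pow B. \<Phi> ((g T)(i := u i))) + (\<Sum>T\<in>Pow B. \<Phi> ((g T)(i := v i)))"
    by (simp only: multiadditive_onD[OF \<Phi> i] sum.distrib)
  also have "\<dots> = (\<Sum>T\<in>insert i ` Pow B. \<Phi> (h T)) + (\<Sum>T\<in>Pow B. \<Phi> (h T))"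
  proof -
    have "inj_on (insert i) (Pow B)"
      using insert.hyps by (auto intro!: inj_onI)
    then have "(\<Sum>T\<in>insert i ` Pow B. \<Phi> (h T)) = (\<Sum>T\<in>Pow B. \<Phi> (h (insert i T)))"
      by (simp add: sum.reindex)
    moreover have "(\<Sum>T\<in>Pow B. \<Phi> (h (insert i T))) = (\<Sum>T\<in>Pow B. \<Phi> ((g T)(i := u i)))"
      "(\<Sum>T\<in>Pow B. \<Phi> (h T)) = (\<Sum>T\<in>Pow B. \<Phi> ((g T)(i := v i)))"
      by (intro sum.cong refl; simp only: h_g Pow_iff)+
    ultimately show ?thesis
      by simp
  qed
  also have "\<dots> = (\<Sum>T\<in>Pow (insert i B). \<Phi> (h T))"
    unfolding Pow_insert using insert.hyps
    by (subst sum.union_disjoint) (auto simp: add.commute)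
  finally show ?case
    by (simp only: h_def)
qed

lemma multiadditive_on_of_nat_mult:
  fixes \<Phi> :: "('i \<Rightarrow> 'a::semiring_1) \<Rightarrow> 'b::ring_1"
  assumes \<Phi>: "multiadditive_on I \<Phi>" and j: "j \<in> I"
  shows "\<Phi> (x(j := of_nat q * a)) = of_nat q * \<Phi> (x(j := a))"
proof (induction q)
  case 0
  have "\<Phi> (x(j := 0)) = \<Phi> (x(j := 0)) + \<Phi> (x(j := 0))"
    using multiadditive_onD[OF \<Phi> j, of x 0 0] by (simp only: add_0)
  then show ?case
    by (simp only: of_nat_0 mult_zero_left add_cancel_right_right)
next
  case (Suc q)
  have "(of_nat (Suc q) :: 'a) * a = a + of_nat q * a"
    by (simp add: algebra_simps)
  then have "\<Phi> (x(j := of_nat (Suc q) * a)) = \<Phi> (x(j := a)) + \<Phi> (x(j := of_nat q * a))"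
    by (simp only: multiadditive_onD[OF \<Phi> j])
  also have "\<dots> = of_nat (Suc q) * \<Phi> (x(j := a))"
    by (simp only: Suc.IH of_nat_Suc distrib_right mult_1_left add.commute)
  finally show ?case .
qed

lemma multiadditive_on_of_nat_mult_pow:
  fixes \<Phi> :: "('i \<Rightarrow> 'a::semiring_1) \<Rightarrow> 'b::ring_1"
  assumes \<Phi>: "multiadditive_on I \<Phi>" and "finite T" and "T \<subseteq> I"
  shows "\<Phi> (\<lambda>j. if j \<in> T then of_nat q * u j else x j) =
    of_nat q ^ card T * \<Phi> (\<lambda>j. if j \<in> T then u j else x j)"
  using assms(2,3)
proof (induction T arbitrary: x rule: finite_induct)
  case empty
  then show ?case by simp
next
  case (insert i T)
  define g where "g = (\<lambda>j. if j \<in> T then u j else x j)"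
  have i: "i \<in> I"
    using insert.prems by simp
  have card: "card (insert i T) = Suc (card T)"
    using insert.hyps by simp
  have "\<Phi> (\<lambda>j. if j \<in> insert i T then of_nat q * u j else x j) =
      \<Phi> (\<lambda>j. if j \<in> T then of_nat q * u j else (x(i := of_nat q * u i)) j)"
    by (rule arg_cong[where f = \<Phi>]) (auto simp: fun_eq_iff)
  also have "\<dots> = of_nat q ^ card T * \<Phi> (\<lambda>j. if j \<in> T then u j else (x(i := of_nat q * u i)) j)"
    using insert.prems by (intro insert.IH) simp
  also have "(\<lambda>j. if j \<in> T then u j else (x(i := of_nat q * u i)) j) = g(i := of_nat q * u i)"
    using insert.hyps by (auto simp: g_def fun_eq_iff)
  also have "\<Phi> (g(i := of_nat q * u i)) = of_nat q * \<Phi> (g(i := u i))"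
    by (rule multiadditive_on_of_nat_mult[OF \<Phi> i])
  also have "g(i := u i) = (\<lambda>j. if j \<in> insert i T then u j else x j)"
    by (auto simp: g_def fun_eq_iff)
  finally show ?case
    by (simp only: card power_Suc2 mult.assoc)
qed

lemma coeff_eq_0_if_vanishing_at_nats:
  fixes d :: "nat \<Rightarrow> 'a::{idom,ring_char_0}"
  assumes "\<And>q::nat. (\<Sum>t\<le>s. of_nat q ^ t * d t) = 0" and "t \<le> s"
  shows "d t = 0"
proof -
  define p where "p = (\<Sum>t\<le>s. monom (d t) t)"
  have "range (of_nat :: nat \<Rightarrow> 'a) \<subseteq> {z. poly p z = 0}"
    using assms(1) by (auto simp: p_def poly_sum poly_monom mult.commute)
  moreover have "infinite (range (of_nat :: nat \<Rightarrow> 'a))"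
    by (simp add: range_inj_infinite inj_of_nat)
  ultimately have "p = 0"
    using poly_roots_finite finite_subset by blast
  moreover have "coeff p t = d t"
    using \<open>t \<le> s\<close> by (simp add: p_def coeff_sum sum.delta)
  ultimately show ?thesis
    by simp
qed

lemma sum_singletons_eq_0_if_sum_Pow_powers_eq_0:
  fixes f :: "'i set \<Rightarrow> 'a::{idom,ring_char_0}"
  assumes fin: "finite B" and vanish: "\<And>q::nat. (\<Sum>T\<in>Pow B. of_nat q ^ card T * f T) = 0"
  shows "(\<Sum>j\<in>B. f {j}) = 0"
proof (cases "B = {}")
  case False
  define d where "d t = (\<Sum>T\<in>{T\<in>Pow B. card T = t}. f T)" for t
  have "(\<Sum>t\<le>card B. of_nat q ^ t * d t) = (\<Sum>T\<in>Pow B. of_nat q ^ card T * f T)" for q :: nat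
  proof -
    have "(\<Sum>t\<le>card B. of_nat q ^ t * d t) =
        (\<Sum>t\<le>card B. \<Sum>T\<in>{T\<in>Pow B. card T = t}. of_nat q ^ card T * f T)"
      by (simp add: d_def sum_distrib_left)
    also have "\<dots> = (\<Sum>T\<in>Pow B. of_nat q ^ card T * f T)"
      by (rule sum.group) (auto simp: fin card_mono)
    finally show ?thesis .
  qed
  then have "d 1 = 0"
    using coeff_eq_0_if_vanishing_at_nats[of d "card B" 1] vanish False fin
    by (simp add: Suc_leI card_gt_0_iff)
  moreover have "{T\<in>Pow B. card T = 1} = (\<lambda>j. {j}) ` B"
    by (auto simp: card_1_singleton_iff)
  ultimately show ?thesis
    by (simp add: d_def sum.reindex)
qed simp

lemma symmetric_multiadditive_on_eq_0_if_ray_eq_0: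
  fixes \<Phi> :: "('i \<Rightarrow> 'a::semiring_1) \<Rightarrow> 'b::{idom,ring_char_0}"
  assumes add: "multiadditive_on I \<Phi>" and symmetric: "symmetric_on I \<Phi>"
    and B: "finite B" "B \<subseteq> I" "p \<in> B"
    and ray: "\<And>q::nat. \<Phi> (\<lambda>j. if j \<in> B then of_nat q * a + b else x j) = 0"
  shows "\<Phi> (\<lambda>j. if j = p then a else if j \<in> B then b else x j) = 0"
proof -
  define w where "w T = (\<lambda>j. if j \<in> T then a else if j \<in> B then b else x j)" for T
  have "(\<Sum>T\<in>Pow B. of_nat q ^ card T * \<Phi> (w T)) = 0" for q :: nat
  proof -
    have "(\<Sum>T\<in>Pow B. of_nat q ^ card T * \<Phi> (w T)) =
        (\<Sum>T\<in>Pow B. \<Phi> (\<lambda>j. if j \<in> T then of_nat q * a else if j \<in> B then b else x j))"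
    proof (rule sum.cong[OF refl])
      fix T assume "T \<in> Pow B"
      then have "finite T" "T \<subseteq> I"
        using B finite_subset by auto
      from multiadditive_on_of_nat_mult_pow[OF add this, of q "\<lambda>_. a" "\<lambda>j. if j \<in> B then b else x j"]
      show "of_nat q ^ card T * \<Phi> (w T) =
          \<Phi> (\<lambda>j. if j \<in> T then of_nat q * a else if j \<in> B then b else x j)"
        unfolding w_def by (rule sym)
    qed
    also have "\<dots> = \<Phi> (\<lambda>j. if j \<in> B then of_nat q * a + b else x j)"
      by (rule multiadditive_on_expand[OF add B(1,2), symmetric])
    finally show ?thesis
      using ray by simp
  qed
  then have "(\<Sum>j\<in>B. \<Phi> (w {j})) = 0"
    by (rule sum_singletons_eq_0_if_sum_Pow_powers_eq_0[OF B(1)])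
  moreover have "\<Phi> (w {j}) = \<Phi> (w {p})" if "j \<in> B" for j
  proof -
    have "w {j} \<circ> transpose j p = w {p}"
      using that B(3) by (auto simp: w_def fun_eq_iff transpose_def)
    moreover have "transpose j p permutes I"
      using that B by (intro permutes_swap_id) auto
    ultimately show ?thesis
      using symmetric unfolding symmetric_on_def by metis
  qed
  ultimately have "of_nat (card B) * \<Phi> (w {p}) = 0"
    by simp
  moreover have "card B \<noteq> 0"
    using B by auto
  moreover have "w {p} = (\<lambda>j. if j = p then a else if j \<in> B then b else x j)"
    by (simp add: w_def)
  ultimately show ?thesis
    by simp
qed

lemma symmetric_multiadditive_on_eq_0:
  fixes \<Phi> :: "('i \<Rightarrow> 'a::semiring_1) \<Rightarrow> 'b::{idom,ring_char_0}"
  assumes I: "finite I" and add: "multiadditive_on I \<Phi>" and symmetric: "symmetric_on I \<Phi>"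
    and diagonal: "\<And>x c. \<forall>j\<in>I. x j = c \<Longrightarrow> \<Phi> x = 0"
  shows "\<Phi> x = 0"
proof -
  have "\<forall>x b. (\<forall>j\<in>I - J. x j = b) \<longrightarrow> \<Phi> x = 0" if "finite J" "J \<subseteq> I" for J
    using that
  proof (induction J rule: finite_subset_induct')
    case empty
    then show ?case
      using diagonal by blast
  next
    case (insert p J)
    show ?case
    proof (intro allI impI)
      fix x :: "'i \<Rightarrow> 'a" and b assume x: "\<forall>j\<in>I - insert p J. x j = b"
      have B: "finite (I - J)" "I - J \<subseteq> I" "p \<in> I - J"
        using I insert.hyps by auto
      have "\<Phi> (\<lambda>j. if j \<in> I - J then of_nat q * x p + b else x j) = 0" for q :: nat
        using insert.IH[rule_format, of _ "of_nat q * x p + b"] by simp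
      then have "\<Phi> (\<lambda>j. if j = p then x p else if j \<in> I - J then b else x j) = 0"
        by (rule symmetric_multiadditive_on_eq_0_if_ray_eq_0[OF add symmetric B])
      moreover have "(\<lambda>j. if j = p then x p else if j \<in> I - J then b else x j) = x"
        using x by (auto simp: fun_eq_iff)
      ultimately show "\<Phi> x = 0"
        by simp
    qed
  qed
  then show ?thesis
    using I by blast
qed

lemma prod_fun_upd:
  fixes x :: "'i \<Rightarrow> 'a::comm_monoid_mult"
  assumes "finite A"
  shows "(\<Prod>j\<in>A. (x(i := v)) j) = (if i \<in> A then v * (\<Prod>j\<in>A - {i}. x j) else (\<Prod>j\<in>A. x j))"
proof (cases "i \<in> A")
  case True
  then have "(\<Prod>j\<in>A. (x(i := v)) j) = v * (\<Prod>j\<in>A - {i}. (x(i := v)) j)"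
    using prod.remove[OF assms True, of "x(i := v)"] by simp
  also have "(\<Prod>j\<in>A - {i}. (x(i := v)) j) = (\<Prod>j\<in>A - {i}. x j)"
    by (rule prod.cong) auto
  finally show ?thesis
    using True by simp
qed (auto intro: prod.cong)

lemma sum_card_subsets_image_permutes:
  assumes "\<sigma> permutes A"
  shows "(\<Sum>S\<in>{S. S \<subseteq> A \<and> card S = k}. h (\<sigma> ` S)) = (\<Sum>S\<in>{S. S \<subseteq> A \<and> card S = k}. h S)"
proof (rule sum.reindex_bij_witness[of _ "image (inv \<sigma>)" "image \<sigma>"])
  have inj: "inj_on \<sigma> S" "inj_on (inv \<sigma>) S" for S
    using permutes_inj_on[OF assms] permutes_inj_on[OF permutes_inv[OF assms]] by auto
  show "S \<in> {S. S \<subseteq> A \<and> card S = k} \<Longrightarrow> inv \<sigma> ` \<sigma> ` S = S"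
    "S \<in> {S. S \<subseteq> A \<and> card S = k} \<Longrightarrow> \<sigma> ` inv \<sigma> ` S = S" for S
    by (simp_all add: image_image permutes_inverses[OF assms])
  show "S \<in> {S. S \<subseteq> A \<and> card S = k} \<Longrightarrow> inv \<sigma> ` S \<in> {S. S \<subseteq> A \<and> card S = k}"
    "S \<in> {S. S \<subseteq> A \<and> card S = k} \<Longrightarrow> \<sigma> ` S \<in> {S. S \<subseteq> A \<and> card S = k}" for S
    using permutes_in_image[OF assms] permutes_in_image[OF permutes_inv[OF assms]]
    by (auto simp: card_image inj)
qed simp

definition omitted_product_sum :: "(complex \<Rightarrow> complex) \<Rightarrow> nat \<Rightarrow> (nat \<Rightarrow> complex) \<Rightarrow> complex" where
  "omitted_product_sum F n x = (\<Sum>k=1..n. (-1) ^ (k + 1) *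
     (\<Sum>S\<in>{S. S \<subseteq> {1..n+1} \<and> card S = k}. (\<Prod>j\<in>S. x j) * F (\<Prod>j\<in>{1..n+1} - S. x j)))"

lemma multiadditive_on_prod_mult_additive:
  fixes A :: "'i set"
  assumes F: "additive_fun F" and "finite A" and "S \<subseteq> A"
  shows "multiadditive_on A (\<lambda>x. (\<Prod>j\<in>S. x j) * F (\<Prod>j\<in>A - S. x j))"
  unfolding multiadditive_on_def
proof (intro allI impI)
  fix x :: "'i \<Rightarrow> complex" and j a b assume j: "j \<in> A"
  have fin: "finite S" "finite (A - S)"
    using assms finite_subset by auto
  show "(\<Prod>i\<in>S. (x(j := a + b)) i) * F (\<Prod>i\<in>A - S. (x(j := a + b)) i) =
    (\<Prod>i\<in>S. (x(j := a)) i) * F (\<Prod>i\<in>A - S. (x(j := a)) i) +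
    (\<Prod>i\<in>S. (x(j := b)) i) * F (\<Prod>i\<in>A - S. (x(j := b)) i)"
  proof (cases "j \<in> S")
    case True
    then show ?thesis
      by (simp only: prod_fun_upd[OF fin(1)] prod_fun_upd[OF fin(2)]) (simp add: algebra_simps)
  next
    case False
    with j have "F ((a + b) * prod x (A - S - {j})) =
        F (a * prod x (A - S - {j})) + F (b * prod x (A - S - {j}))"
      using F by (simp add: additive_fun_def distrib_right)
    with False j show ?thesis
      by (simp only: prod_fun_upd[OF fin(1)] prod_fun_upd[OF fin(2)]) (simp add: algebra_simps)
  qed
qed

lemma multiadditive_on_omitted_product_sum:
  assumes "additive_fun F"
  shows "multiadditive_on {1..n+1} (omitted_product_sum F n)"
  unfolding omitted_product_sum_def
  by (intro multiadditive_on_sum multiadditive_on_cmult multiadditive_on_prod_mult_additive assms)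
     auto

lemma symmetric_on_omitted_product_sum: "symmetric_on {1..n+1} (omitted_product_sum F n)"
  unfolding symmetric_on_def
proof (intro allI impI)
  fix x :: "nat \<Rightarrow> complex" and \<sigma> assume \<sigma>: "\<sigma> permutes {1..n+1}"
  define h where "h S = (\<Prod>j\<in>S. x j) * F (\<Prod>j\<in>{1..n+1} - S. x j)" for S
  have "(\<Prod>j\<in>S. (x \<circ> \<sigma>) j) * F (\<Prod>j\<in>{1..n+1} - S. (x \<circ> \<sigma>) j) = h (\<sigma> ` S)" for S
  proof -
    have "{1..n+1} - \<sigma> ` S = \<sigma> ` ({1..n+1} - S)"
      using permutes_image[OF \<sigma>] permutes_inj[OF \<sigma>] by (simp add: image_set_diff)
    then show ?thesis
      using permutes_inj_on[OF \<sigma>] by (simp add: h_def prod.reindex)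
  qed
  then have "omitted_product_sum F n (x \<circ> \<sigma>) =
      (\<Sum>k=1..n. (-1) ^ (k + 1) * (\<Sum>S\<in>{S. S \<subseteq> {1..n+1} \<and> card S = k}. h (\<sigma> ` S)))"
    by (simp only: omitted_product_sum_def)
  also have "\<dots> = (\<Sum>k=1..n. (-1) ^ (k + 1) * (\<Sum>S\<in>{S. S \<subseteq> {1..n+1} \<and> card S = k}. h S))"
    by (simp only: sum_card_subsets_image_permutes[OF \<sigma>])
  also have "\<dots> = omitted_product_sum F n x"
    by (simp only: omitted_product_sum_def h_def)
  finally show "omitted_product_sum F n (x \<circ> \<sigma>) = omitted_product_sum F n x" .
qed

lemma omitted_product_sum_const:
  assumes "\<forall>j\<in>{1..n+1}. x j = \<alpha>"
  shows "omitted_product_sum F n x =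
    (\<Sum>i=1..n. of_nat ((n + 1) choose i) * (-1) ^ (n - i) * \<alpha> ^ (n + 1 - i) * F (\<alpha> ^ i))"
proof -
  let ?I = "{1..n+1::nat}"
  have "(\<Sum>S\<in>{S. S \<subseteq> ?I \<and> card S = k}. (\<Prod>j\<in>S. x j) * F (\<Prod>j\<in>?I - S. x j))
      = of_nat ((n + 1) choose k) * \<alpha> ^ k * F (\<alpha> ^ (n + 1 - k))" for k
  proof -
    have "(\<Prod>j\<in>S. x j) * F (\<Prod>j\<in>?I - S. x j) = \<alpha> ^ k * F (\<alpha> ^ (n + 1 - k))"
      if "S \<subseteq> ?I" "card S = k" for S
      using that assms card_Diff_subset[OF finite_subset[OF that(1)] that(1)]
      by (simp add: subset_iff)
    then show ?thesis
      using n_subsets[of ?I k] by (simp add: mult.assoc)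
  qed
  then have "omitted_product_sum F n x =
      (\<Sum>k=1..n. (-1) ^ (k + 1) * (of_nat ((n + 1) choose k) * \<alpha> ^ k * F (\<alpha> ^ (n + 1 - k))))"
    by (simp add: omitted_product_sum_def)
  also have "\<dots> = (\<Sum>i=1..n. (-1) ^ (n + 1 - i + 1) *
      (of_nat ((n + 1) choose (n + 1 - i)) * \<alpha> ^ (n + 1 - i) * F (\<alpha> ^ (n + 1 - (n + 1 - i)))))"
    by (subst sum.atLeastAtMost_rev) simp
  also have "\<dots> = (\<Sum>i=1..n. of_nat ((n + 1) choose i) * (-1) ^ (n - i) * \<alpha> ^ (n + 1 - i) * F (\<alpha> ^ i))"
  proof (rule sum.cong[OF refl])
    fix i assume i: "i \<in> {1..n}"
    then have "n + 1 - i + 1 = (n - i) + 2" "n + 1 - (n + 1 - i) = i"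
      "(n + 1) choose (n + 1 - i) = (n + 1) choose i"
      by (auto simp: binomial_symmetric[symmetric])
    then show "(-1) ^ (n + 1 - i + 1) * (of_nat ((n + 1) choose (n + 1 - i)) * \<alpha> ^ (n + 1 - i) *
        F (\<alpha> ^ (n + 1 - (n + 1 - i)))) =
      of_nat ((n + 1) choose i) * (-1) ^ (n - i) * \<alpha> ^ (n + 1 - i) * F (\<alpha> ^ i)"
      by (simp add: power_add)
  qed
  finally show ?thesis .
qed

lemma prod_eq_omitted_product_sum_if_diagonal:
  assumes F: "additive_fun F"
    and diagonal: "\<And>\<alpha>. F (\<alpha> ^ (n + 1)) =
      (\<Sum>i=1..n. of_nat ((n + 1) choose i) * (-1) ^ (n - i) * \<alpha> ^ (n + 1 - i) * F (\<alpha> ^ i))"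
  shows "F (\<Prod>j\<in>{1..n+1}. x j) = omitted_product_sum F n x"
proof -
  let ?I = "{1..n+1::nat}"
  let ?\<Phi> = "\<lambda>x. F (\<Prod>j\<in>?I. x j) - omitted_product_sum F n x"
  have "?\<Phi> x = 0"
  proof (rule symmetric_multiadditive_on_eq_0[of ?I ?\<Phi>])
    show "multiadditive_on ?I ?\<Phi>"
      using multiadditive_on_prod_mult_additive[OF F, of ?I "{}"]
      by (intro multiadditive_on_diff multiadditive_on_omitted_product_sum F) simp_all
    show "symmetric_on ?I ?\<Phi>"
      by (intro symmetric_on_diff symmetric_on_prod symmetric_on_omitted_product_sum)
    show "?\<Phi> y = 0" if "\<forall>j\<in>?I. y j = c" for y c
      using that diagonal omitted_product_sum_const[OF that] by simp
  qed simp
  then show ?thesis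
    by simp
qed

theorem mainTheorem8:
  fixes F :: "complex \<Rightarrow> complex" and n :: nat
  assumes "n \<ge> 1" and "additive_fun F"
  shows "(\<forall>\<alpha>::complex. F (\<alpha> ^ (n + 1)) =
            (\<Sum>i=1..n. of_nat ((n + 1) choose i) * (-1) ^ (n - i) * \<alpha> ^ (n + 1 - i) * F (\<alpha> ^ i)))
         \<longleftrightarrow>
         (\<forall>x :: nat \<Rightarrow> complex. F (\<Prod>j\<in>{1..n+1}. x j) =
            (\<Sum>k=1..n. (-1) ^ (k + 1) *
               (\<Sum>S\<in>{S. S \<subseteq> {1..n+1} \<and> card S = k}.
                  (\<Prod>j\<in>S. x j) * F (\<Prod>j\<in>{1..n+1} - S. x j))))"
  unfolding omitted_product_sum_def[symmetric]
proof
  assume "\<forall>\<alpha>. F (\<alpha> ^ (n + 1)) =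
    (\<Sum>i=1..n. of_nat ((n + 1) choose i) * (-1) ^ (n - i) * \<alpha> ^ (n + 1 - i) * F (\<alpha> ^ i))"
  then show "\<forall>x. F (\<Prod>j\<in>{1..n+1}. x j) = omitted_product_sum F n x"
    using prod_eq_omitted_product_sum_if_diagonal[OF assms(2)] by blast
next
  assume product_identity: "\<forall>x. F (\<Prod>j\<in>{1..n+1}. x j) = omitted_product_sum F n x"
  show "\<forall>\<alpha>. F (\<alpha> ^ (n + 1)) =
    (\<Sum>i=1..n. of_nat ((n + 1) choose i) * (-1) ^ (n - i) * \<alpha> ^ (n + 1 - i) * F (\<alpha> ^ i))"
  proof
    fix \<alpha> :: complex
    have "F (\<alpha> ^ (n + 1)) = omitted_product_sum F n (\<lambda>_. \<alpha>)"
      using product_identity[rule_format, of "\<lambda>_. \<alpha>"] by simp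
    also have "\<dots> = (\<Sum>i=1..n. of_nat ((n + 1) choose i) * (-1) ^ (n - i) * \<alpha> ^ (n + 1 - i) * F (\<alpha> ^ i))"
      by (rule omitted_product_sum_const) simp
    finally show "F (\<alpha> ^ (n + 1)) =
      (\<Sum>i=1..n. of_nat ((n + 1) choose i) * (-1) ^ (n - i) * \<alpha> ^ (n + 1 - i) * F (\<alpha> ^ i))" .
  qed
qed

end
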